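(* Let $(X,d)$ be a metric space, let $k\ge 1$ and let $p_1,\dots,p_k\in X$ be arbitrary points. For $p\in X$ define $\mu_p(x,y)=d(x,y)+\sqrt{d(x,p)d(y,p)}$. Then for all $x,y,z\in X$, $$\prod_{i=1}^k\big(\mu_{p_i}(x,z)+\mu_{p_i}(y,z)\big)\leq 9^k\Big(\prod_{i=1}^k\mu_{p_i}(x,z)+\prod_{i=1}^k\mu_{p_i}(y,z)\Big).$$ *)

theory Defs
  imports "HOL-Analysis.Analysis"
begin

definition mu :: "'a::metric_space \<Rightarrow> 'a \<Rightarrow> 'a \<Rightarrow> real" where
  "mu p x y = dist x y + sqrt (dist x p * dist y p)"

end

theory Submission
  imports Defs
begin

text \<open>If \<open>d(x,z) \<le> d(y,z)\<close>, the triangle inequality gives \<open>\<mu>\<^sub>p(x,z) \<le> 4 \<mu>\<^sub>p(y,z)\<close> for every \<open>p\<close>,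
  so each factor on the left is at most \<open>5 \<mu>\<^sub>p(y,z)\<close> and the left side is at most
  \<open>5\<^sup>k \<Prod>\<^sub>i \<mu>\<^sub>p\<^sub>i(y,z)\<close>. By symmetry the same holds with \<open>x\<close> and \<open>y\<close> exchanged.\<close>

lemma mult_le_nine_times:
  fixes D t s e :: real
  assumes "0 \<le> D" "0 \<le> t" "0 \<le> s" "0 \<le> e" "e \<le> D + t" "t \<le> D + s"
  shows "e * t \<le> 9 * (D * D + s * t)"
proof -
  have "e * t \<le> (D + t) * t" using assms by (simp add: mult_right_mono)
  also have "\<dots> \<le> 9 * (D * D + s * t)"
  proof (cases "t \<le> 2 * D")
    case True
    then have "(D + t) * t \<le> (3 * D) * (2 * D)" using assms by (intro mult_mono) auto
    also have "\<dots> \<le> 9 * (D * D)" by simp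
    also have "\<dots> \<le> 9 * (D * D + s * t)" using assms by simp
    finally show ?thesis .
  next
    case False
    \<comment> \<open>then \<open>s \<ge> t - D > t / 2\<close>, hence \<open>D + t < 3 s\<close>\<close>
    then have "(D + t) * t \<le> (3 * s) * t" using assms by (intro mult_right_mono) auto
    also have "\<dots> \<le> 9 * (D * D + s * t)" using assms by simp
    finally show ?thesis .
  qed
  finally show ?thesis .
qed

lemma sqrt_mult_le_three_times:
  fixes D t s e :: real
  assumes "0 \<le> D" "0 \<le> t" "0 \<le> s" "0 \<le> e" "e \<le> D + t" "t \<le> D + s"
  shows "sqrt (e * t) \<le> 3 * (D + sqrt (s * t))"
proof -
  have "e * t \<le> 9 * (D * D + s * t)" using mult_le_nine_times[OF assms] .
  also have "\<dots> \<le> (3 * (D + sqrt (s * t)))\<^sup>2"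
    using assms by (simp add: power2_eq_square algebra_simps)
  finally show ?thesis
    using assms by (intro real_le_lsqrt) auto
qed

lemma mu_nonneg: "0 \<le> mu p x y"
  by (simp add: mu_def)

lemma mu_le_four_mu:
  assumes "dist x z \<le> dist y z"
  shows "mu p x z \<le> 4 * mu p y z"
proof -
  have "dist x p \<le> dist y z + dist z p"
    using assms dist_triangle[of x p z] by simp
  moreover have "dist z p \<le> dist y z + dist y p"
    using dist_triangle[of z p y] by (simp add: dist_commute)
  ultimately have "sqrt (dist x p * dist z p) \<le> 3 * (dist y z + sqrt (dist y p * dist z p))"
    by (intro sqrt_mult_le_three_times) auto
  moreover have "0 \<le> sqrt (dist y p * dist z p)" by simp
  ultimately show ?thesis
    using assms unfolding mu_def distrib_left by linarith
qed

lemma prod_add_le_power_prod: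
  fixes a b :: "'i \<Rightarrow> real"
  assumes "\<And>i. i \<in> A \<Longrightarrow> 0 \<le> a i" "\<And>i. i \<in> A \<Longrightarrow> 0 \<le> b i"
    and "\<And>i. i \<in> A \<Longrightarrow> a i \<le> c * b i"
  shows "(\<Prod>i\<in>A. a i + b i) \<le> (c + 1) ^ card A * (\<Prod>i\<in>A. b i)"
proof -
  have "(\<Prod>i\<in>A. a i + b i) \<le> (\<Prod>i\<in>A. (c + 1) * b i)"
    using assms by (intro prod_mono) (auto simp: algebra_simps)
  also have "\<dots> = (c + 1) ^ card A * (\<Prod>i\<in>A. b i)"
    by (simp add: prod.distrib)
  finally show ?thesis .
qed

lemma prod_mu_add_le_of_dist_le:
  fixes p :: "'i \<Rightarrow> 'a::metric_space"
  assumes "dist x z \<le> dist y z"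
  shows "(\<Prod>i\<in>A. mu (p i) x z + mu (p i) y z)
           \<le> 9 ^ card A * ((\<Prod>i\<in>A. mu (p i) x z) + (\<Prod>i\<in>A. mu (p i) y z))"
proof -
  have "(\<Prod>i\<in>A. mu (p i) x z + mu (p i) y z) \<le> 5 ^ card A * (\<Prod>i\<in>A. mu (p i) y z)"
    using prod_add_le_power_prod[of A "\<lambda>i. mu (p i) x z" "\<lambda>i. mu (p i) y z" 4]
    by (simp add: mu_nonneg mu_le_four_mu[OF assms])
  also have "\<dots> \<le> 9 ^ card A * (\<Prod>i\<in>A. mu (p i) y z)"
    by (intro mult_right_mono power_mono prod_nonneg) (auto simp: mu_nonneg)
  also have "\<dots> \<le> 9 ^ card A * ((\<Prod>i\<in>A. mu (p i) x z) + (\<Prod>i\<in>A. mu (p i) y z))"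
    by (simp add: prod_nonneg mu_nonneg)
  finally show ?thesis .
qed

theorem lemma3p3:
  fixes p :: "nat \<Rightarrow> 'a::metric_space" and k :: nat and x y z :: 'a
  assumes "k \<ge> 1"
  shows "(\<Prod>i=1..k. mu (p i) x z + mu (p i) y z)
           \<le> 9 ^ k * ((\<Prod>i=1..k. mu (p i) x z) + (\<Prod>i=1..k. mu (p i) y z))"
proof (cases "dist x z \<le> dist y z")
  case True
  from prod_mu_add_le_of_dist_le[OF this, of p "{1..k}"] show ?thesis by simp
next
  case False
  then have "dist y z \<le> dist x z" by simp
  from prod_mu_add_le_of_dist_le[OF this, of p "{1..k}"] show ?thesis
    by (simp add: add.commute)
qed

end
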